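(* Let $R$ be a $*$-reducing ring and let $p,q\in R$ be projections. Then the following conditions are equivalent: (1) $1-pq$ is MP invertible; (2) $1-pqp$ is MP invertible; (3) $p-pqp$ is MP invertible; (4) $p-pq$ is MP invertible; (5) $p-qp$ is MP invertible; (6) $1-qp$ is MP invertible; (7) $1-qpq$ is MP invertible; (8) $q-qpq$ is MP invertible; (9) $q-qp$ is MP invertible; (10) $q-pq$ is MP invertible. Moreover, when any one of these conditions holds, $(p-pqp)^{\dagger}=(1-pq)^{\dagger}p$.
   Context: $R$ is an associative ring with identity $1$ and an involution $a\mapsto a^*$ (satisfying $(a^* )^*=a$, $(a+b)^*=a^*+b^*$, $(ab)^*=b^*a^*$). $R$ is $*$-reducing if $a^*a=0$ implies $a=0$ for all $a\in R$. An element $a$ is MP invertible if there is $b$ with $aba=a$, $bab=b$, $(ab)^*=ab$, $(ba)^*=ba$; this $b$ is unique and written $a^{\dagger}$. A projection is an element $p$ with $p^2=p=p^*$. *)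

theory Defs
  imports Main
begin

class ring_invol = ring_1 +
  fixes star :: "'a \<Rightarrow> 'a"
  assumes star_star: "star (star a) = a"
      and star_add: "star (a + b) = star a + star b"
      and star_mult: "star (a * b) = star b * star a"

context ring_invol
begin

definition is_MP_inverse :: "'a \<Rightarrow> 'a \<Rightarrow> bool" where
  "is_MP_inverse a b \<longleftrightarrow> a * b * a = a \<and> b * a * b = b \<and>
      star (a * b) = a * b \<and> star (b * a) = b * a"

definition MP_invertible :: "'a \<Rightarrow> bool" where
  "MP_invertible a \<longleftrightarrow> (\<exists>b. is_MP_inverse a b)"

definition MP_inv :: "'a \<Rightarrow> 'a" where
  "MP_inv a = (THE b. is_MP_inverse a b)"

definition projection :: "'a \<Rightarrow> bool" where
  "projection p \<longleftrightarrow> p * p = p \<and> star p = p"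

end

definition star_reducing :: "'a::ring_invol itself \<Rightarrow> bool" where
  "star_reducing (_ :: 'a itself) \<longleftrightarrow> (\<forall>a::'a. star a * a = 0 \<longrightarrow> a = 0)"

end

theory Submission
  imports Defs
begin

text \<open>Put \<open>A = p - pqp\<close>, a Hermitian element of the corner \<open>pRp\<close>, and \<open>k = pq(1 - p)\<close>.
  Then \<open>1 - pq = A + (1 - p) - k\<close> and \<open>A - A\<^sup>2 = k k\<^sup>*\<close>. In a \<open>*\<close>-reducing ring
  every Hermitian \<open>x\<close> with \<open>xA = 0\<close> also satisfies \<open>xk = 0\<close>, because
  \<open>(xk)(xk)\<^sup>* = x(A - A\<^sup>2)x = 0\<close>. This is what lets an MP inverse \<open>b\<close> of \<open>A\<close> be turned
  into the MP inverse \<open>b + bk + (1 - p)\<close> of \<open>1 - pq\<close>, and conversely an MP inverse \<open>s\<close>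
  of \<open>1 - pq\<close> be compressed to the MP inverse \<open>sp\<close> of \<open>A\<close>. The other equivalences follow
  from \<open>1 - pqp = A + (1 - p)\<close>, \<open>(p - pq)(p - pq)\<^sup>* = A\<close>, taking adjoints, and the
  symmetry between \<open>p\<close> and \<open>q\<close>.\<close>

context ring_invol
begin

lemma star_zero [simp]: "star 0 = 0"
  using star_add[of 0 0] by simp

lemma star_one [simp]: "star 1 = 1"
  by (metis star_mult star_star mult_1_left)

lemma star_uminus [simp]: "star (- a) = - star a"
  using star_add[of a "- a"] by (metis add.right_inverse add_eq_0_iff2 star_zero)

lemma star_diff [simp]: "star (a - b) = star a - star b"
  using star_add[of a "- b"] by simp

declare star_star [simp] star_add [simp] star_mult [simp]

lemma is_MP_inverse_unique:
  assumes b: "is_MP_inverse a b" and c: "is_MP_inverse a c"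
  shows "b = c"
proof -
  have b1: "a*b*a = a" "b*a*b = b" "star (a*b) = a*b" "star (b*a) = b*a"
    and c1: "a*c*a = a" "c*a*c = c" "star (a*c) = a*c" "star (c*a) = c*a"
    using b c unfolding is_MP_inverse_def by auto
  have "b = b * star (a*b)" using b1 by (simp add: mult.assoc)
  also have "\<dots> = b * star b * star (a*c*a)" using c1 by (simp add: mult.assoc)
  also have "\<dots> = b * (star (a*b) * star (a*c))" by (simp add: mult.assoc)
  also have "\<dots> = b*a*c" using b1 c1 by (simp add: mult.assoc[symmetric])
  finally have bac: "b = b*a*c" .
  have "c = star (c*a) * c" using c1 by (simp add: mult.assoc)
  also have "\<dots> = star (a*b*a) * star c * c" using b1 by (simp add: mult.assoc)
  also have "\<dots> = star (b*a) * star (c*a) * c" by (simp add: mult.assoc)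
  also have "\<dots> = b*a*c" using b1 c1 by (simp add: mult.assoc)
  finally show ?thesis using bac by simp
qed

lemma MP_inv_eqI: "is_MP_inverse a b \<Longrightarrow> MP_inv a = b"
  unfolding MP_inv_def using is_MP_inverse_unique by blast

lemma is_MP_inverse_MP_inv: "MP_invertible a \<Longrightarrow> is_MP_inverse a (MP_inv a)"
  unfolding MP_invertible_def using MP_inv_eqI by auto

lemma is_MP_inverse_star: "is_MP_inverse a b \<Longrightarrow> is_MP_inverse (star a) (star b)"
  unfolding is_MP_inverse_def by (metis star_mult star_star mult.assoc)

lemma MP_invertible_star_iff: "MP_invertible (star a) \<longleftrightarrow> MP_invertible a"
  unfolding MP_invertible_def by (metis is_MP_inverse_star star_star)

lemma is_MP_inverse_hermitian:
  assumes "star a = a" and "is_MP_inverse a b"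
  shows "star b = b" and "a*b = b*a"
proof -
  have "is_MP_inverse a (star b)" using is_MP_inverse_star[OF assms(2)] assms(1) by simp
  then show sb: "star b = b" using is_MP_inverse_unique assms(2) by blast
  have "a*b = star (a*b)" using assms(2) unfolding is_MP_inverse_def by simp
  also have "\<dots> = b*a" using sb assms(1) by simp
  finally show "a*b = b*a" .
qed

lemma is_MP_inverse_mult_star:
  assumes "is_MP_inverse a b"
  shows "is_MP_inverse (a * star a) (star b * b)"
proof -
  have h: "a*(b*a) = a" "b*(a*b) = b" "star b * star a = a*b" "star a * star b = b*a"
    using assms unfolding is_MP_inverse_def by (auto simp: mult.assoc)
  have hx: "a*(b*(a*x)) = a*x" "b*(a*(b*x)) = b*x" "star b * (star a * x) = a*(b*x)"
    "star a * (star b * x) = b*(a*x)" for x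
    using h by (metis mult.assoc)+
  have "a*(b*star b) = star b"
    by (metis h(2,3) star_mult mult.assoc star_star)
  then have bsb: "a*(b*(star b*x)) = star b*x" for x by (metis mult.assoc)
  have asa0: "b*(a*star a) = star a"
    by (metis h(1,4) star_mult mult.assoc)
  then have asa: "b*(a*(star a*x)) = star a*x" for x by (metis mult.assoc)
  have st: "a * star a * (star b * b) = a*b"
    by (simp add: mult.assoc h hx)
  have ts: "star b * b * (a * star a) = a*b"
    by (simp add: mult.assoc h hx asa0 asa)
  show ?thesis unfolding is_MP_inverse_def
  proof (intro conjI)
    show "a * star a * (star b * b) * (a * star a) = a * star a"
      unfolding st by (simp add: mult.assoc h hx)
    show "star b * b * (a * star a) * (star b * b) = star b * b"
      unfolding ts by (simp add: mult.assoc h bsb)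
    show "star (a * star a * (star b * b)) = a * star a * (star b * b)"
      unfolding st using assms unfolding is_MP_inverse_def by simp
    show "star (star b * b * (a * star a)) = star b * b * (a * star a)"
      unfolding ts using assms unfolding is_MP_inverse_def by simp
  qed
qed

lemma range_projection_absorbs_commutant:
  assumes ca: "c*a = a*c" and cs: "c*star a = star a*c" and ab: "is_MP_inverse a b"
  shows "a*b*c = a*b*c*a*b"
proof -
  have h: "a*b*a = a" "star b * star a = a*b"
    using ab unfolding is_MP_inverse_def by (auto simp: mult.assoc)
  have sa: "star a = star a * a * b"
    by (metis h star_mult mult.assoc)
  have "a*b*c = star b * star a * c" using h by simp
  also have "\<dots> = star b * c * (star a * a * b)" using cs sa by (simp add: mult.assoc)
  also have "\<dots> = star b * star a * c * a * b" using cs by (metis mult.assoc)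
  also have "\<dots> = a*b*c*a*b" using h by simp
  finally show ?thesis .
qed

lemma domain_projection_absorbs_commutant:
  assumes ca: "c*a = a*c" and cs: "c*star a = star a*c" and ab: "is_MP_inverse a b"
  shows "c*b*a = b*a*c*b*a"
proof -
  have h: "a*b*a = a" "star a * star b = b*a"
    using ab unfolding is_MP_inverse_def by (auto simp: mult.assoc)
  have sa: "star a = b * a * star a"
    by (metis h star_mult mult.assoc)
  have "c*b*a = c * (star a * star b)" using h by (simp add: mult.assoc)
  also have "\<dots> = b * a * star a * c * star b" using cs sa by (metis mult.assoc)
  also have "\<dots> = b * a * c * (star a * star b)" using cs by (metis mult.assoc)
  also have "\<dots> = b*a*c*b*a" using h by (simp add: mult.assoc)
  finally show ?thesis .
qed

lemma MP_inverse_commute: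
  assumes ca: "c*a = a*c" and cs: "c*star a = star a*c" and ab: "is_MP_inverse a b"
  shows "c*b = b*c"
proof -
  have ca': "star c * a = a * star c" by (metis cs star_mult star_star)
  have cs': "star c * star a = star a * star c" by (metis ca star_mult)
  have hb: "b*a*b = b" "star (a*b) = a*b" "star (b*a) = b*a"
    using ab unfolding is_MP_inverse_def by auto
  have hbx: "star b * (star a * z) = a*(b*z)" "star a * (star b * z) = b*(a*z)"
     "b*(a*(b*z)) = b*z" for z
    using hb by (metis star_mult mult.assoc)+
  have "star (a*b*star c) = star (a*b*star c*a*b)"
    using range_projection_absorbs_commutant[OF ca' cs' ab] by simp
  then have "c*(a*b) = a*b*c*(a*b)" using hb by (simp add: mult.assoc hbx)
  then have cab: "c*a*b = a*b*c"
    using range_projection_absorbs_commutant[OF ca cs ab] by (simp add: mult.assoc)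
  have "star (star c*b*a) = star (b*a*star c*b*a)"
    using domain_projection_absorbs_commutant[OF ca' cs' ab] by simp
  then have "b*a*c = b*a*(c*(b*a))" using hb by (simp add: mult.assoc hbx)
  then have bac: "b*a*c = c*b*a"
    using domain_projection_absorbs_commutant[OF ca cs ab] by (simp add: mult.assoc hbx)
  have "b*c = b*(a*b*c)" using hbx by (simp add: mult.assoc)
  also have "\<dots> = b*a*c*b" using cab ca by (simp add: mult.assoc)
  also have "\<dots> = c*b" using bac hb by (simp add: mult.assoc)
  finally show ?thesis by simp
qed

lemma is_MP_inverse_corner:
  assumes p: "projection p" and pa: "p*a = a" "a*p = a" and ab: "is_MP_inverse a b"
  shows "p*b = b" and "b*p = b"
proof -
  have hb: "star (a*b) = a*b" "star (b*a) = b*a" "b*a*b = b"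
    using ab unfolding is_MP_inverse_def by auto
  have sa: "star a * p = star a" "p * star a = star a"
    using p pa unfolding projection_def by (metis star_mult)+
  have "b = star a * star b * b" using hb by (metis star_mult mult.assoc)
  then show "p*b = b" using sa by (metis mult.assoc)
  have "b = b * star b * star a" using hb by (metis star_mult mult.assoc)
  then show "b*p = b" using sa by (metis mult.assoc)
qed

lemma is_MP_inverse_add_compl:
  assumes p: "projection p" and pa: "p*a = a" "a*p = a" and ab: "is_MP_inverse a b"
  shows "is_MP_inverse (a + (1 - p)) (b + (1 - p))"
proof -
  have pp: "p*p = p" using p unfolding projection_def by auto
  have hb: "a*b*a = a" "b*a*b = b" "star (a*b) = a*b" "star (b*a) = b*a"
    using ab unfolding is_MP_inverse_def by auto
  have pb: "p*b = b" and bp: "b*p = b" using is_MP_inverse_corner[OF p pa ab] by auto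
  have r: "p*(p*x) = p*x" "p*(a*x) = a*x" "a*(p*x) = a*x" "b*(p*x) = b*x" "p*(b*x) = b*x"
    "a*(b*(a*x)) = a*x" "b*(a*(b*x)) = b*x" "a*(b*a) = a" "b*(a*b) = b" for x
    using pp pa bp pb hb by (metis mult.assoc)+
  have "(a + (1 - p)) * (b + (1 - p)) = a*b + (1 - p)"
    and "(b + (1 - p)) * (a + (1 - p)) = b*a + (1 - p)"
    by (simp_all add: algebra_simps pp pa bp pb r)
  then show ?thesis unfolding is_MP_inverse_def
    using hb p unfolding projection_def by (simp add: algebra_simps pa bp pb r)
qed

lemma is_MP_inverse_of_add_compl:
  assumes p: "projection p" and pa: "p*a = a" "a*p = a"
    and xy: "is_MP_inverse (a + (1 - p)) y"
  shows "is_MP_inverse a (p*y)"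
proof -
  define x where "x = a + (1 - p)"
  have pp: "p*p = p" "star p = p" using p unfolding projection_def by auto
  have sa: "star a * p = star a" "p * star a = star a"
    using pa pp by (metis star_mult)+
  have px: "p*x = a" "x*p = a" unfolding x_def by (simp_all add: algebra_simps pp pa)
  have "p * star x = star x * p" unfolding x_def by (simp add: algebra_simps pp sa)
  then have py: "p*y = y*p"
    using MP_inverse_commute[of p x y] px xy unfolding x_def by simp
  have hy: "x*y*x = x" "y*x*y = y" "star (x*y) = x*y" "star (y*x) = y*x"
    using xy unfolding is_MP_inverse_def x_def by auto
  have r: "p*(p*z) = p*z" "x*(p*z) = p*(x*z)" "y*(p*z) = p*(y*z)" "x*p = p*x" "y*p = p*y"
    "x*(y*(x*z)) = x*z" "y*(x*(y*z)) = y*z" "x*(y*x) = x" "y*(x*y) = y" for z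
    using pp px py hy by (metis mult.assoc)+
  have e1: "a*(p*y) = p*(x*y)" and e2: "p*y*a = p*(y*x)"
    using px r by (metis mult.assoc)+
  show ?thesis unfolding is_MP_inverse_def
  proof (intro conjI)
    show "a * (p * y) * a = a" "p * y * a * (p * y) = p * y"
      unfolding px(1)[symmetric] by (simp_all add: mult.assoc r pp)
    show "star (a * (p * y)) = a * (p * y)" "star (p * y * a) = p * y * a"
      unfolding e1 e2 using hy pp r by (simp_all add: mult.assoc)
  qed
qed

lemma MP_invertible_add_compl_iff:
  assumes "projection p" and "p*a = a" and "a*p = a"
  shows "MP_invertible (a + (1 - p)) \<longleftrightarrow> MP_invertible a"
  unfolding MP_invertible_def
  using is_MP_inverse_add_compl[OF assms] is_MP_inverse_of_add_compl[OF assms] by blast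

end

lemma star_reducing_right:
  fixes a :: "'a::ring_invol"
  assumes "star_reducing TYPE('a)" and "a * star a = 0"
  shows "a = 0"
proof -
  have "star (star a) * star a = 0" using assms(2) by simp
  then have "star a = 0" using assms(1) unfolding star_reducing_def by blast
  then show ?thesis by (metis star_star star_zero)
qed

lemma is_MP_inverse_of_mult_star:
  fixes a :: "'a::ring_invol"
  assumes R: "star_reducing TYPE('a)" and t: "is_MP_inverse (a * star a) t"
  shows "is_MP_inverse a (star a * t)"
proof -
  have st: "star t = t" and com: "a * star a * t = t * (a * star a)"
    using is_MP_inverse_hermitian[OF _ t] by simp_all
  have sts: "a * star a * t * (a * star a) = a * star a"
    and tst: "t * (a * star a) * t = t"
    using t unfolding is_MP_inverse_def by auto
  have sts': "a * (star a * (t * (a * (star a * x)))) = a * (star a * x)" for x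
    using sts by (simp add: mult.assoc[symmetric])
  have sts'': "a * (star a * (t * (a * star a))) = a * star a"
    using sts by (simp add: mult.assoc)
  have tst': "t * (a * (star a * t)) = t" using tst by (simp add: mult.assoc)
  have "(a - a * star a * t * a) * star (a - a * star a * t * a) = 0"
    by (simp add: st algebra_simps sts' sts'')
  then have "a - a * star a * t * a = 0" by (rule star_reducing_right[OF R])
  then have "a * (star a * t) * a = a" by (simp add: mult.assoc)
  moreover have "star a * t * a * (star a * t) = star a * t"
    by (simp add: mult.assoc tst')
  moreover have "star (a * (star a * t)) = a * (star a * t)"
    using com by (simp add: st mult.assoc)
  ultimately show ?thesis unfolding is_MP_inverse_def by (simp add: st mult.assoc)
qed

lemma MP_invertible_mult_star_iff:
  fixes a :: "'a::ring_invol"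
  assumes "star_reducing TYPE('a)"
  shows "MP_invertible (a * star a) \<longleftrightarrow> MP_invertible a"
  unfolding MP_invertible_def
  using is_MP_inverse_mult_star is_MP_inverse_of_mult_star[OF assms] by blast

locale corner_defect =
  fixes p A k :: "'a::ring_invol"
  assumes reducing: "star_reducing TYPE('a)"
    and proj: "projection p"
    and A_hermitian: "star A = A" and p_A: "p*A = A" and A_p: "A*p = A"
    and defect: "A - A*A = k * star k" and p_k: "p*k = k" and k_p: "k*p = 0"
begin

lemma hermitian_annihilator_kills_defect:
  assumes "star X = X" and "X*A = 0"
  shows "X*k = 0"
proof -
  have "X*k * star (X*k) = X*(A - A*A)*X" using assms(1) defect by (simp add: mult.assoc)
  also have "\<dots> = X*A*X - X*A*A*X" by (simp add: algebra_simps)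
  also have "\<dots> = 0" using assms(2) by simp
  finally show ?thesis using star_reducing_right[OF reducing] by blast
qed

lemma MP_inverse_absorbs_defect:
  assumes Ab: "is_MP_inverse A b"
  shows "A*(b*k) = k"
proof -
  have sb: "star b = b" and com: "A*b = b*A"
    using is_MP_inverse_hermitian[OF A_hermitian Ab] by auto
  have "A*b*A = A" using Ab unfolding is_MP_inverse_def by auto
  then have "(p - A*b) * A = 0" using p_A by (simp add: left_diff_distrib)
  moreover have "star (p - A*b) = p - A*b"
    using proj sb A_hermitian com unfolding projection_def by simp
  ultimately have "(p - A*b) * k = 0" using hermitian_annihilator_kills_defect by blast
  then show ?thesis using p_k by (simp add: left_diff_distrib mult.assoc)
qed

lemma is_MP_inverse_perturbation:
  assumes Ab: "is_MP_inverse A b"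
  shows "is_MP_inverse (A + (1-p) - k) (b + b*k + (1-p))"
proof -
  have pp: "p*p = p" "star p = p" using proj unfolding projection_def by auto
  have sb: "star b = b" and com: "A*b = b*A"
    using is_MP_inverse_hermitian[OF A_hermitian Ab] by auto
  have hb: "A*b*A = A" "b*A*b = b" using Ab unfolding is_MP_inverse_def by auto
  have pb: "p*b = b" and bp: "b*p = b"
    using is_MP_inverse_corner[OF proj p_A A_p Ab] by auto
  have Abk: "A*(b*k) = k" by (rule MP_inverse_absorbs_defect[OF Ab])
  have AAb: "A*(A*b) = A" using hb com by (simp add: mult.assoc[symmetric])
  have Abb: "A*(b*b) = b" using hb com by (metis mult.assoc)
  have kA: "k*A = 0" and kb: "k*b = 0" and kk: "k*k = 0"
    using k_p p_A pb p_k by (metis mult.assoc mult_zero_left)+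
  have r: "p*(p*z) = p*z" "p*(A*z) = A*z" "A*(p*z) = A*z" "p*(b*z) = b*z" "b*(p*z) = b*z"
    "p*(k*z) = k*z" "k*(p*z) = 0" "A*(A*(b*z)) = A*z" "A*(b*(b*z)) = b*z"
    "b*(A*z) = A*(b*z)" "A*(b*(k*z)) = k*z" "k*(A*z) = 0" "k*(b*z) = 0" "k*(k*z) = 0" for z
    using pp p_A A_p pb bp p_k k_p AAb Abb com Abk kA kb kk
    by (metis mult.assoc mult_zero_left)+
  note rules = r pp p_A A_p p_k k_p pb bp AAb Abb com[symmetric] Abk kA kb kk
  have "(A + (1-p) - k) * (b + b*k + (1-p)) = A*b + (1-p)"
    and "(b + b*k + (1-p)) * (A + (1-p) - k) = A*b + (1-p)"
    by (simp_all add: algebra_simps rules)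
  then show ?thesis unfolding is_MP_inverse_def
    using sb A_hermitian by (simp add: algebra_simps rules)
qed

lemma perturbation_corner_parts:
  "(1-p) * (A + (1-p) - k) = 1-p" "(A + (1-p) - k) * p = A"
  using proj p_A A_p p_k k_p unfolding projection_def by (simp_all add: algebra_simps)

lemma cokernel_projection_kills_defect:
  assumes us: "is_MP_inverse (A + (1-p) - k) s"
  shows "p * (1 - (A + (1-p) - k) * s) * p * k = 0"
proof -
  define u where "u = A + (1-p) - k"
  have hu: "u*s*u = u" "star (u*s) = u*s"
    using us unfolding is_MP_inverse_def u_def by auto
  have "(1 - u*s) * A = (1 - u*s) * u * p"
    using perturbation_corner_parts unfolding u_def by (simp add: mult.assoc)
  also have "\<dots> = 0" using hu by (simp add: left_diff_distrib)
  finally have "p * (1 - u*s) * p * A = 0" using p_A by (simp add: mult.assoc)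
  moreover have "star (p * (1 - u*s) * p) = p * (1 - u*s) * p"
    using proj hu unfolding projection_def by (simp add: mult.assoc)
  ultimately show ?thesis
    using hermitian_annihilator_kills_defect unfolding u_def by blast
qed

lemma cokernel_projection_kills_compl:
  assumes us: "is_MP_inverse (A + (1-p) - k) s"
  shows "(1 - (A + (1-p) - k) * s) * (1-p) = 0"
proof -
  define u where "u = A + (1-p) - k"
  define f where "f = 1 - p"
  define W where "W = 1 - u*s"
  have hu: "u*s*u = u" "star (u*s) = u*s"
    using us unfolding is_MP_inverse_def u_def by auto
  have sW: "star W = W" and sf: "star f = f"
    unfolding W_def f_def using hu proj unfolding projection_def by simp_all
  have "u*(s*(u*s)) = u*s" using hu by (simp add: mult.assoc[symmetric])
  then have WW: "W*W = W" unfolding W_def by (simp add: algebra_simps)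
  have Wu: "W*u = 0" unfolding W_def using hu by (simp add: left_diff_distrib)
  then have "W*A = 0"
    using perturbation_corner_parts(2) unfolding u_def by (metis mult.assoc mult_zero_left)
  then have Wf: "W*f = W*k"
    using Wu unfolding u_def f_def by (simp add: algebra_simps)
  have "p*(W*f) = p*W*p*k" using Wf p_k by (simp add: mult.assoc)
  then have pWf: "p*(W*f) = 0"
    using cokernel_projection_kills_defect[OF us] unfolding W_def u_def by simp
  have "star (W*f) * (W*f) = f*(W*W)*f" using sf sW by (simp add: mult.assoc)
  also have "\<dots> = f*(W*k)" using WW Wf by (simp add: mult.assoc)
  also have "\<dots> = star (p*(W*f)) * k"
    using sf sW p_k proj unfolding projection_def by (simp add: mult.assoc)
  also have "\<dots> = 0" using pWf by simp
  finally have "W*f = 0" using reducing unfolding star_reducing_def by blast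
  then show ?thesis unfolding W_def u_def f_def .
qed

lemma is_MP_inverse_of_perturbation:
  assumes us: "is_MP_inverse (A + (1-p) - k) s"
  shows "is_MP_inverse A (s*p)"
proof -
  define u where "u = A + (1-p) - k"
  define f where "f = 1 - p"
  have hu: "u*s*u = u" "s*u*s = s" "star (u*s) = u*s" "star (s*u) = s*u"
    using us unfolding is_MP_inverse_def u_def by auto
  have sf: "star f = f" and fp: "f*p = 0" and p_eq: "p = 1 - f"
    unfolding f_def using proj unfolding projection_def by (simp_all add: algebra_simps)
  have fu: "f*u = f" and up: "u*p = A"
    unfolding u_def f_def using perturbation_corner_parts by simp_all
  have Pf: "u*s*f = f"
    using cokernel_projection_kills_compl[OF us] unfolding u_def f_def by (simp add: algebra_simps)
  have fs: "f*s = f"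
  proof -
    have "f*s = f*u*s" using fu by simp
    also have "\<dots> = f * star (u*s)" by (simp only: hu(3) mult.assoc)
    also have "\<dots> = star (u*s*f)" using sf by simp
    finally show ?thesis using Pf sf by simp
  qed
  have Qf: "s*u*f = f"
  proof -
    have fsu: "f*(s*u) = f" using fs fu by (metis mult.assoc)
    have "s*u*f = star (f*(s*u))" by (simp only: star_mult[of f "s*u"] sf hu(4))
    then show ?thesis by (simp only: fsu sf)
  qed
  have AC: "A*(s*p) = u*s - f"
  proof -
    have "A*(s*p) = u*p*s*p" using up by (simp add: mult.assoc)
    also have "\<dots> = u*s*p - u*(f*s)*p" by (subst (1) p_eq) (simp add: algebra_simps)
    also have "\<dots> = u*s - f" using fs fp Pf by (subst p_eq) (simp add: algebra_simps)
    finally show ?thesis .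
  qed
  have CA: "s*p*A = s*u - f"
  proof -
    have "s*p*A = s*u*p" using up p_A by (simp add: mult.assoc)
    also have "\<dots> = s*u - f" using Qf by (subst p_eq) (simp add: algebra_simps)
    finally show ?thesis .
  qed
  have fA: "f*A = 0" unfolding f_def using p_A by (simp add: left_diff_distrib)
  show ?thesis unfolding is_MP_inverse_def
  proof (intro conjI)
    have "A*(s*p)*A = u*s*u*p - f*A" using up by (simp add: AC left_diff_distrib mult.assoc)
    then show "A*(s*p)*A = A" using hu up fA by simp
    have "s*p*A*(s*p) = s*u*s*p - f*s*p" using CA by (simp add: left_diff_distrib mult.assoc)
    then show "s*p*A*(s*p) = s*p" using hu(2) fs fp by simp
    show "star (A*(s*p)) = A*(s*p)" "star (s*p*A) = s*p*A"
      unfolding AC CA using hu sf by simp_all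
  qed
qed

lemma MP_invertible_perturbation_iff:
  "MP_invertible (A + (1-p) - k) \<longleftrightarrow> MP_invertible A"
  unfolding MP_invertible_def
  using is_MP_inverse_perturbation is_MP_inverse_of_perturbation by blast

lemma MP_inv_corner:
  "MP_invertible (A + (1-p) - k) \<Longrightarrow> MP_inv A = MP_inv (A + (1-p) - k) * p"
  by (intro MP_inv_eqI is_MP_inverse_of_perturbation is_MP_inverse_MP_inv)

end

lemma corner_defect_of_projections:
  fixes p q :: "'a::ring_invol"
  assumes "star_reducing TYPE('a)" and p: "projection p" and q: "projection q"
  shows "corner_defect p (p - p*q*p) (p*q - p*q*p)"
proof -
  have pp: "p*p = p" "star p = p" and qq: "q*q = q" "star q = q"
    using p q unfolding projection_def by auto
  have r: "p*(p*z) = p*z" "q*(q*z) = q*z" for z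
    using pp qq by (metis mult.assoc)+
  show ?thesis
    by unfold_locales (use assms pp qq r in \<open>simp_all add: algebra_simps\<close>)
qed

lemma MP_invertible_one_minus_mult_iff:
  fixes p q :: "'a::ring_invol"
  assumes "star_reducing TYPE('a)" and "projection p" and "projection q"
  shows "MP_invertible (1 - p*q) \<longleftrightarrow> MP_invertible (p - p*q*p)"
proof -
  interpret corner_defect p "p - p*q*p" "p*q - p*q*p"
    using corner_defect_of_projections[OF assms] .
  have "1 - p*q = (p - p*q*p) + (1 - p) - (p*q - p*q*p)" by simp
  then show ?thesis using MP_invertible_perturbation_iff by simp
qed

lemma MP_inv_compression:
  fixes p q :: "'a::ring_invol"
  assumes "star_reducing TYPE('a)" and "projection p" and "projection q"
    and "MP_invertible (1 - p*q)"
  shows "MP_inv (p - p*q*p) = MP_inv (1 - p*q) * p"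
proof -
  interpret corner_defect p "p - p*q*p" "p*q - p*q*p"
    using corner_defect_of_projections[OF assms(1-3)] .
  have "1 - p*q = (p - p*q*p) + (1 - p) - (p*q - p*q*p)" by simp
  then show ?thesis using MP_inv_corner assms(4) by simp
qed

lemma MP_invertible_one_minus_compression_iff:
  fixes p q :: "'a::ring_invol"
  assumes p: "projection p"
  shows "MP_invertible (1 - p*q*p) \<longleftrightarrow> MP_invertible (p - p*q*p)"
proof -
  have pp: "p*p = p" using p unfolding projection_def by auto
  then have "p*(p*z) = p*z" for z by (metis mult.assoc)
  then have "p*(p - p*q*p) = p - p*q*p" "(p - p*q*p)*p = p - p*q*p"
    using pp by (simp_all add: algebra_simps)
  moreover have "1 - p*q*p = (p - p*q*p) + (1 - p)" by simp
  ultimately show ?thesis using MP_invertible_add_compl_iff[OF p] by metis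
qed

lemma MP_invertible_minus_mult_iff:
  fixes p q :: "'a::ring_invol"
  assumes "star_reducing TYPE('a)" and "projection p" and "projection q"
  shows "MP_invertible (p - p*q) \<longleftrightarrow> MP_invertible (p - p*q*p)"
proof -
  have pp: "p*p = p" "star p = p" and qq: "q*q = q" "star q = q"
    using assms(2,3) unfolding projection_def by auto
  have "p*(p*z) = p*z" "q*(q*z) = q*z" for z
    using pp qq by (metis mult.assoc)+
  then have "(p - p*q) * star (p - p*q) = p - p*q*p"
    using pp qq by (simp add: algebra_simps)
  then show ?thesis using MP_invertible_mult_star_iff[OF assms(1), of "p - p*q"] by simp
qed

lemma MP_invertible_swap_iff:
  fixes p q :: "'a::ring_invol"
  assumes "projection p" and "projection q"
  shows "MP_invertible (1 - q*p) \<longleftrightarrow> MP_invertible (1 - p*q)"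
    and "MP_invertible (p - q*p) \<longleftrightarrow> MP_invertible (p - p*q)"
  using assms MP_invertible_star_iff[of "1 - p*q"] MP_invertible_star_iff[of "p - p*q"]
  unfolding projection_def by simp_all

theorem corollary2p5:
  fixes p q :: "'a :: ring_invol"
  assumes "star_reducing TYPE('a)"
    and "projection p" and "projection q"
  shows "(MP_invertible (1 - p*q) \<longleftrightarrow> MP_invertible (1 - p*q*p))
       \<and> (MP_invertible (1 - p*q*p) \<longleftrightarrow> MP_invertible (p - p*q*p))
       \<and> (MP_invertible (p - p*q*p) \<longleftrightarrow> MP_invertible (p - p*q))
       \<and> (MP_invertible (p - p*q) \<longleftrightarrow> MP_invertible (p - q*p))
       \<and> (MP_invertible (p - q*p) \<longleftrightarrow> MP_invertible (1 - q*p))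
       \<and> (MP_invertible (1 - q*p) \<longleftrightarrow> MP_invertible (1 - q*p*q))
       \<and> (MP_invertible (1 - q*p*q) \<longleftrightarrow> MP_invertible (q - q*p*q))
       \<and> (MP_invertible (q - q*p*q) \<longleftrightarrow> MP_invertible (q - q*p))
       \<and> (MP_invertible (q - q*p) \<longleftrightarrow> MP_invertible (q - p*q))
       \<and> (MP_invertible (1 - p*q) \<longrightarrow> MP_inv (p - p*q*p) = MP_inv (1 - p*q) * p)"
  using MP_invertible_one_minus_mult_iff[OF assms] MP_invertible_one_minus_mult_iff[OF assms(1,3,2)]
    MP_invertible_one_minus_compression_iff[OF assms(2), of q]
    MP_invertible_one_minus_compression_iff[OF assms(3), of p]
    MP_invertible_minus_mult_iff[OF assms] MP_invertible_minus_mult_iff[OF assms(1,3,2)]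
    MP_invertible_swap_iff[OF assms(2,3)] MP_invertible_swap_iff[OF assms(3,2)]
    MP_inv_compression[OF assms]
  by blast

end
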